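(* Let $(K,C,S)$ be a layered simplicial complex and let $(K,C,S)\searrow(K-\{f,p\},C,S-\{f,p\})$ be an elementary $S$-collapse of a principal simplex $p\in S$ using the free face $f\in S$ of $p$. Then the freely orthogonal deformation retraction $H:|K|\times I\to|K|$ associated to $p$ and $f$ satisfies $H_t(|K|-|S|)=|K|-|S|$ and $H_t(|S|)\subseteq|S|$ for all $t\in I$.
   Context: A simplicial complex is a set of finite nonempty sets (simplices) closed under passing to nonempty subsets (faces); $|K|$ is its geometric realization and $|s|$ the closed geometric simplex. A simplex is principal in $K$ if it is not a proper face of any simplex of $K$; $f$ is free in $K$ if it is a proper face of a principal simplex $p$ and of no other simplex of $K$. A layered simplicial complex is $(K,C,S)$ with $C,S$ disjoint subcomplexes of $K$. An elementary $S$-collapse uses $p\in S$ principal in $K$ and a face $f$ of $p$ free in $K$. Freely orthogonal deformation retraction: let $p$ be principal in $K$ with free face $f$, let $v$ be the vertex of $p$ not in $f$ and $f_1,\dots,f_m$ the vertices of $f$ ($m\ge1$). Identify $|p|$ via barycentric coordinates with $\{x\in\mathbb R^m: x_i\ge0,\ \sum x_i\le1\}$ ($v\mapsto0$, $f_i\mapsto e_i$). Define $r:|p|\to|p|$ by $r(x)=(x_1-x_j,\dots,x_m-x_j)$ where $x_j=\min\{x_1,\dots,x_m\}$, and $H:|K|\times I\to|K|$ by $H(x,t)=(1-t)x+t\,r(x)$ for $x\in|p|$ and $H(x,t)=x$ for $x\in|K|-|p|$; $H_t=H(\cdot,t)$. *)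

theory Defs
  imports "HOL-Analysis.Analysis"
begin

definition simplicial_complex :: "'v set set \<Rightarrow> bool" where
  "simplicial_complex K \<longleftrightarrow>
     (\<forall>s\<in>K. finite s \<and> s \<noteq> {}) \<and> (\<forall>s\<in>K. \<forall>t. t \<subseteq> s \<and> t \<noteq> {} \<longrightarrow> t \<in> K)"

definition subcomplex :: "'v set set \<Rightarrow> 'v set set \<Rightarrow> bool" where
  "subcomplex L K \<longleftrightarrow> simplicial_complex L \<and> L \<subseteq> K"

definition layered_complex :: "'v set set \<Rightarrow> 'v set set \<Rightarrow> 'v set set \<Rightarrow> bool" where
  "layered_complex K C S \<longleftrightarrow>
     simplicial_complex K \<and> subcomplex C K \<and> subcomplex S K \<and> C \<inter> S = {}"

definition principal :: "'v set \<Rightarrow> 'v set set \<Rightarrow> bool" where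
  "principal p K \<longleftrightarrow> p \<in> K \<and> \<not> (\<exists>q\<in>K. p \<subset> q)"

definition free_face :: "'v set \<Rightarrow> 'v set set \<Rightarrow> bool" where
  "free_face f K \<longleftrightarrow> (\<exists>p. principal p K \<and> f \<subset> p \<and> (\<forall>q\<in>K. f \<subset> q \<longrightarrow> q = p))"

text \<open>Elementary S-collapse (K,C,S) to (K-{f,p},C,S-{f,p}) using the principal simplex
  p of S and its free face f of S (codimension one, as required for the retraction).\<close>
definition elementary_S_collapse ::
  "'v set set \<Rightarrow> 'v set set \<Rightarrow> 'v set set \<Rightarrow> 'v set \<Rightarrow> 'v set \<Rightarrow> bool" where
  "elementary_S_collapse K C S f p \<longleftrightarrow>
     layered_complex K C S \<and> p \<in> S \<and> f \<in> S \<and> principal p K \<and> f \<subset> p \<and>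
     free_face f K \<and> card p = card f + 1"

text \<open>Geometric realization via barycentric coordinates: points are functions 'v \<Rightarrow> real.\<close>
definition geom_simplex :: "'v set \<Rightarrow> ('v \<Rightarrow> real) set" where
  "geom_simplex s = {x. (\<forall>w. 0 \<le> x w) \<and> (\<forall>w. w \<notin> s \<longrightarrow> x w = 0) \<and> sum x s = 1}"

definition geom :: "'v set set \<Rightarrow> ('v \<Rightarrow> real) set" where
  "geom K = (\<Union>s\<in>K. geom_simplex s)"

definition fo_retract :: "'v set \<Rightarrow> 'v set \<Rightarrow> ('v \<Rightarrow> real) \<Rightarrow> ('v \<Rightarrow> real)" where
  "fo_retract p f x =
     (let m = Min (x ` f) in
      (\<lambda>w. if w \<in> f then x w - m
           else if w \<in> p then 1 - (\<Sum>u\<in>f. x u - m)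
           else 0))"

definition fo_homotopy :: "'v set \<Rightarrow> 'v set \<Rightarrow> ('v \<Rightarrow> real) \<Rightarrow> real \<Rightarrow> ('v \<Rightarrow> real)" where
  "fo_homotopy p f x t =
     (if x \<in> geom_simplex p then (\<lambda>w. (1 - t) * x w + t * fo_retract p f x w) else x)"

end

theory Submission
  imports Defs
begin

text \<open>The homotopy moves only points of \<open>|p|\<close>, and \<open>|p| \<subseteq> |S|\<close> because \<open>p \<in> S\<close>;
  so off \<open>|S|\<close> every \<open>H\<^sub>t\<close> is the identity. On \<open>|p|\<close>, \<open>r\<close> lowers each coordinate
  at a vertex of \<open>f\<close> by their minimum \<open>m \<ge> 0\<close> and adds the removed mass \<open>|f| m\<close> to the
  coordinate at the remaining vertex \<open>v\<close>, so \<open>r(x) \<in> |p|\<close>; by convexity of \<open>|p|\<close> every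
  \<open>H\<^sub>t(x)\<close> stays in \<open>|p| \<subseteq> |S|\<close>.\<close>

lemma geom_simplex_subset_geom: "s \<in> K \<Longrightarrow> geom_simplex s \<subseteq> geom K"
  by (auto simp: geom_def)

lemma geom_simplex_convex_combination:
  assumes "x \<in> geom_simplex p" and "y \<in> geom_simplex p" and "0 \<le> t" "t \<le> 1"
  shows "(\<lambda>w. (1 - t) * x w + t * y w) \<in> geom_simplex p"
proof -
  have "sum (\<lambda>w. (1 - t) * x w + t * y w) p = (1 - t) * sum x p + t * sum y p"
    by (simp add: sum.distrib sum_distrib_left)
  then show ?thesis using assms unfolding geom_simplex_def by simp
qed

lemma fo_retract_in_geom_simplex:
  assumes x: "x \<in> geom_simplex p" and "finite p" and "f \<subset> p" and "card p = card f + 1"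
  shows "fo_retract p f x \<in> geom_simplex p"
proof -
  have "finite f" using assms finite_subset by blast
  then have "card (p - f) = 1" using assms by (simp add: card_Diff_subset psubset_imp_subset)
  then obtain v where "p - f = {v}" by (meson card_1_singletonE)
  then have v: "v \<notin> f" "p = insert v f" using \<open>f \<subset> p\<close> by auto
  define m where "m = Min (x ` f)"
  have x_nonneg: "\<And>w. 0 \<le> x w" and "sum x p = 1" using x by (auto simp: geom_simplex_def)
  then have sum_f: "sum x f = 1 - x v" using v \<open>finite f\<close> by simp
  have m_le: "\<And>u. u \<in> f \<Longrightarrow> m \<le> x u" unfolding m_def using \<open>finite f\<close> by simp
  have moved_mass_nonneg: "0 \<le> real (card f) * m"
    \<comment> \<open>no need for \<open>f \<noteq> {}\<close>: then \<open>m = Min {}\<close> is junk, but multiplied by \<open>card f = 0\<close>\<close>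
  proof (cases "f = {}")
    case False
    then have "0 \<le> m" unfolding m_def using \<open>finite f\<close> x_nonneg by (simp add: Min_ge_iff)
    then show ?thesis by simp
  qed simp
  have v_coord: "1 - (\<Sum>u\<in>f. x u - m) = x v + real (card f) * m"
    by (simp add: sum_subtractf sum_f)
  have r: "fo_retract p f x = (\<lambda>w. if w \<in> f then x w - m
             else if w \<in> p then x v + real (card f) * m else 0)"
    unfolding fo_retract_def m_def[symmetric] Let_def v_coord ..
  have "sum (fo_retract p f x) p = x v + real (card f) * m + (\<Sum>u\<in>f. x u - m)"
    unfolding r using v \<open>finite f\<close> by simp
  also have "\<dots> = 1"
    using v_coord by simp
  finally have "sum (fo_retract p f x) p = 1" .
  moreover have "0 \<le> fo_retract p f x w" for w
    using m_le moved_mass_nonneg x_nonneg[of w] x_nonneg[of v] by (simp add: r)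
  moreover have "fo_retract p f x w = 0" if "w \<notin> p" for w
    using that \<open>f \<subset> p\<close> by (auto simp: r)
  ultimately show ?thesis
    unfolding geom_simplex_def by blast
qed

lemma fo_homotopy_in_geom_simplex:
  assumes "x \<in> geom_simplex p" and "finite p" and "f \<subset> p" and "card p = card f + 1"
    and "0 \<le> t" "t \<le> 1"
  shows "fo_homotopy p f x t \<in> geom_simplex p"
  using assms by (simp add: fo_homotopy_def geom_simplex_convex_combination
      fo_retract_in_geom_simplex)

lemma fo_homotopy_outside_geom_simplex:
  "x \<notin> geom_simplex p \<Longrightarrow> fo_homotopy p f x t = x"
  by (simp add: fo_homotopy_def)

lemma fo_homotopy_image_complement:
  assumes "geom_simplex p \<subseteq> A"
  shows "(\<lambda>x. fo_homotopy p f x t) ` (B - A) = B - A"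
proof -
  have "fo_homotopy p f x t = x" if "x \<in> B - A" for x
    using that assms by (auto intro: fo_homotopy_outside_geom_simplex)
  then show ?thesis by simp
qed

lemma fo_homotopy_image_subset:
  assumes "geom_simplex p \<subseteq> A" and "finite p" and "f \<subset> p" and "card p = card f + 1"
    and "0 \<le> t" "t \<le> 1"
  shows "(\<lambda>x. fo_homotopy p f x t) ` A \<subseteq> A"
proof clarify
  fix x assume "x \<in> A"
  then show "fo_homotopy p f x t \<in> A"
    using assms fo_homotopy_in_geom_simplex[of x p f t]
    by (cases "x \<in> geom_simplex p") (auto simp: fo_homotopy_outside_geom_simplex)
qed

theorem lemma5p3:
  fixes K C S :: "'v set set" and f p :: "'v set"
  assumes "elementary_S_collapse K C S f p"
  shows "\<forall>t\<in>{0..1::real}.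
           (\<lambda>x. fo_homotopy p f x t) ` (geom K - geom S) = geom K - geom S \<and>
           (\<lambda>x. fo_homotopy p f x t) ` geom S \<subseteq> geom S"
proof -
  have "p \<in> S" and "f \<subset> p" and "card p = card f + 1" and "simplicial_complex S"
    using assms by (auto simp: elementary_S_collapse_def layered_complex_def subcomplex_def)
  then have "finite p"
    unfolding simplicial_complex_def by blast
  have "geom_simplex p \<subseteq> geom S"
    using \<open>p \<in> S\<close> by (rule geom_simplex_subset_geom)
  then show ?thesis
    using \<open>finite p\<close> \<open>f \<subset> p\<close> \<open>card p = card f + 1\<close>
    by (simp add: fo_homotopy_image_complement fo_homotopy_image_subset)
qed

end
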